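(* Let $r\in\mathbb{N}$ and $w,v\in\mathbb{YF}^r$. Write $\underline{x}=s(x)$ and $h=h(w,v)$. 1) If $\mathbb{1}_{w,v}=1$, then $$d_r(w,v)=\sum_{l=0}^{h}\big(d_1(\underline{w}[l],\underline{v}[l])-d_1(\underline{w}[l+1],\underline{v}[l+1])\big)\, r^{\#v-\#w-e(v[l])}.$$ 2) If $\mathbb{1}_{w,v}=0$, then $$d_r(w,v)=\sum_{l=0}^{h-1}\big(d_1(\underline{w}[l],\underline{v}[l])-d_1(\underline{w}[l+1],\underline{v}[l+1])\big)\, r^{\#v-\#w-e(v[l])}+d_1(\underline{w_v},\underline{v_w})\, r^{\#v-\#w-e(v_w)}.$$
   Context: Fix $r\in\mathbb{N}$. Words and statistics. Consider finite words over $\{1_1,\dots,1_r,2\}$. A letter $1_i$ is a one with digit value $1$; $2$ is a two with digit value $2$. $|x|$ is the sum of digit values, $\#x$ the number of letters, $e(x)$ the number of ones. The graph $\mathbb{YF}^r$. It is the graded graph on all finite words, graded by $|\cdot|$. From $x$ there is a downward edge to every word obtained by one of two operations: (i) delete the leftmost one; (ii) replace a $2$ lying left of the leftmost one (any $2$ if there are no ones) by $1_i$, with arbitrary $i$. $\mathbb{YF}=\mathbb{YF}^1$ (with $1:=1_1$). $s$ replaces every $1_i$ by $1$. Path counts. $d_r(x,y)$ is the number of downward paths $y=y_n\to\dots\to y_m=x$ with $|y_i|=i$ ($0$ if none); $d_1$ is the count in $\mathbb{YF}$. Suffix notation. $h(w,v)$ is the length (in letters) of the longest common suffix of $w,v$,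 where $1_i\ne1_j$ for $i\neq j$. $w_v$, $v_w$ are $w$, $v$ with that suffix deleted. $\mathbb{1}_{w,v}=1$ if $w_v$ and $v_w$ both end with ones of different indices, else $0$. $x[l]$ is $x$ with its last $l$ letters deleted. *)

theory Defs
  imports Complex_Main
begin

text \<open>Letters: One i stands for the one 1_i, Two for the two.
  Words are lists, read left to right (index 0 = leftmost letter).\<close>

datatype letter = One nat | Two

fun is_one :: "letter \<Rightarrow> bool" where
  "is_one (One i) = True"
| "is_one Two = False"

fun val :: "letter \<Rightarrow> nat" where
  "val (One i) = 1"
| "val Two = 2"

text \<open>A word of YF^r: every one has index in {1..r}.\<close>
definition valid_word :: "nat \<Rightarrow> letter list \<Rightarrow> bool" where
  "valid_word r x = (\<forall>a \<in> set x. case a of One i \<Rightarrow> 1 \<le> i \<and> i \<le> r | Two \<Rightarrow> True)"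

definition weight :: "letter list \<Rightarrow> nat" where
  "weight x = sum_list (map val x)"

definition nletters :: "letter list \<Rightarrow> nat" where
  "nletters x = length x"

definition e :: "letter list \<Rightarrow> nat" where
  "e x = length (filter is_one x)"

definition s :: "letter list \<Rightarrow> letter list" where
  "s x = map (\<lambda>a. case a of One i \<Rightarrow> One 1 | Two \<Rightarrow> Two) x"

definition down :: "nat \<Rightarrow> letter list \<Rightarrow> letter list set" where
  "down r x =
     {y. \<exists>k < length x. is_one (x ! k) \<and> (\<forall>j<k. \<not> is_one (x ! j))
            \<and> y = take k x @ drop (Suc k) x}
   \<union> {y. \<exists>k < length x. \<exists>i. x ! k = Two \<and> (\<forall>j<k. \<not> is_one (x ! j))
            \<and> 1 \<le> i \<and> i \<le> r \<and> y = x[k := One i]}"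

text \<open>Downward paths from y to x: y = p!0 \<rightarrow> p!1 \<rightarrow> ... \<rightarrow> last p = x.
  (Each edge lowers the weight by exactly one, so the grading condition is automatic.)\<close>
definition down_paths :: "nat \<Rightarrow> letter list \<Rightarrow> letter list \<Rightarrow> letter list list set" where
  "down_paths r x y = {p. p \<noteq> [] \<and> hd p = y \<and> last p = x \<and>
       (\<forall>i. Suc i < length p \<longrightarrow> p ! Suc i \<in> down r (p ! i))}"

definition d :: "nat \<Rightarrow> letter list \<Rightarrow> letter list \<Rightarrow> nat" where
  "d r x y = card (down_paths r x y)"

fun lcp :: "'a list \<Rightarrow> 'a list \<Rightarrow> nat" where
  "lcp (a # as) (b # bs) = (if a = b then Suc (lcp as bs) else 0)"
| "lcp _ _ = 0"

definition h :: "letter list \<Rightarrow> letter list \<Rightarrow> nat" where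
  "h w v = lcp (rev w) (rev v)"

text \<open>w_v: w with the common suffix of w and v deleted.\<close>
definition strip :: "letter list \<Rightarrow> letter list \<Rightarrow> letter list" where
  "strip w v = take (length w - h w v) w"

definition cut :: "letter list \<Rightarrow> nat \<Rightarrow> letter list" where
  "cut x l = take (length x - l) x"

definition ind :: "letter list \<Rightarrow> letter list \<Rightarrow> bool" where
  "ind w v = (strip w v \<noteq> [] \<and> strip v w \<noteq> [] \<and>
     (\<exists>i j. last (strip w v) = One i \<and> last (strip v w) = One j \<and> i \<noteq> j))"

end

theory Submission
  imports Defs
begin

(* Write D_r(w,v) = d_r(w,v) - [w, v end in the same letter] d_r(w[1],v[1]); for nonempty v it
   counts the paths from v down to w that act on the last letter of v.  Cutting the common suffix
   of w and v letter by letter telescopes d_r(w,v) into the sum of the D_r(w[l],v[l]), l <= h(w,v).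
   The heart of the proof is D_r(w,v) = r^(#twos(v) - #w) D_1(s w, s v), by induction on |v|.
   For v = u a, the lower neighbours of v are the words c a with c a lower neighbour of u, and at
   most r words obtained by acting on a, which exist only if u = 2...2.  On the first group, the
   subtracted term of D_r removes the paths that never touch a, and s identifies the r ways of
   turning a two into a one, so each two of u contributes a factor r; the second group is handled
   by computing d_r(x, 2...2) from lighter instances of the same identity.  Finally
   #twos(v[l]) - #w[l] = #v - #w - e(v[l]), and D_1(s w[l], s v[l]) is the bracket of the theorem,
   except at l = h, where the subtracted term survives exactly when w_v and v_w end in ones
   (of different indices, by maximality of the common suffix). *)

lemma power_int_of_nat_add:
  fixes x :: "'a::division_ring"
  assumes "x \<noteq> 0"
  shows "x powi (int n + m) = x ^ n * x powi m"
  using assms by (simp add: power_int_add)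

lemma count_list_replicate [simp]: "count_list (replicate n x) y = (if x = y then n else 0)"
  by (induction n) auto

lemma successively_iff_nth:
  "successively P xs \<longleftrightarrow> (\<forall>i. Suc i < length xs \<longrightarrow> P (xs ! i) (xs ! Suc i))"
  by (induction P xs rule: successively.induct) (auto simp: All_less_Suc2)

section \<open>Lower neighbours\<close>

lemma down_Nil [simp]: "down r [] = {}"
  by (simp add: down_def)

lemma down_One [simp]: "down r (One i # u) = {u}"
  unfolding down_def by (auto simp: Ex_less_Suc2 All_less_Suc2)

lemma down_Two: "down r (Two # u) = (\<lambda>j. One j # u) ` {1..r} \<union> Cons Two ` down r u"
  unfolding down_def by (auto simp: Ex_less_Suc2 All_less_Suc2)

lemma finite_down [simp]: "finite (down r x)"
proof (induction x)
  case (Cons a u) then show ?case by (cases a) (simp_all add: down_Two)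
qed simp

lemma weight_Nil [simp]: "weight [] = 0"
  and weight_Cons [simp]: "weight (a # x) = val a + weight x"
  and weight_append [simp]: "weight (x @ y) = weight x + weight y"
  by (simp_all add: weight_def)

lemma weight_down_less: "c \<in> down r x \<Longrightarrow> weight c < weight x"
proof (induction x arbitrary: c)
  case (Cons a u) then show ?case by (cases a) (auto simp: down_Two)
qed simp

lemma weight_replicate_Two [simp]: "weight (replicate k Two) = 2 * k"
  by (induction k) simp_all

definition down_last :: "nat \<Rightarrow> letter list \<Rightarrow> letter \<Rightarrow> letter list set" where
  "down_last r x a = (if set x \<subseteq> {Two}
     then (case a of One i \<Rightarrow> {x} | Two \<Rightarrow> (\<lambda>j. x @ [One j]) ` {1..r}) else {})"

lemma finite_down_last [simp]: "finite (down_last r x a)"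
  by (cases a) (simp_all add: down_last_def)

lemma down_last_One [simp]: "down_last r (One i # u) a = {}"
  by (simp add: down_last_def)

lemma down_last_Two: "down_last r (Two # u) a = Cons Two ` down_last r u a"
  by (cases a) (simp_all add: down_last_def image_image)

lemma down_snoc: "down r (x @ [a]) = (\<lambda>c. c @ [a]) ` down r x \<union> down_last r x a"
proof (induction x)
  case Nil then show ?case by (cases a) (simp_all add: down_Two down_last_def)
next
  case (Cons b u) then show ?case
    by (cases b) (simp_all add: down_Two down_last_Two image_Un image_image Un_ac)
qed

lemma sum_down_snoc:
  "(\<Sum>c\<in>down r (x @ [a]). f c) = (\<Sum>c\<in>down r x. f (c @ [a])) + (\<Sum>c\<in>down_last r x a. f c)"
proof -
  have "(\<lambda>c. c @ [a]) ` down r x \<inter> down_last r x a = {}"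
    by (cases a) (auto simp: down_last_def)
  then show ?thesis
    by (simp add: down_snoc sum.union_disjoint sum.reindex inj_on_def)
qed

lemma sum_down_Two:
  "(\<Sum>c\<in>down r (Two # u). f c) = (\<Sum>j=1..r. f (One j # u)) + (\<Sum>c\<in>down r u. f (Two # c))"
proof -
  have "(\<lambda>j. One j # u) ` {1..r} \<inter> Cons Two ` down r u = {}"
    by auto
  then show ?thesis
    by (simp add: down_Two sum.union_disjoint sum.reindex inj_on_def)
qed

section \<open>Path counts\<close>

lemma down_paths_successively:
  "down_paths r w v = {p. p \<noteq> [] \<and> hd p = v \<and> last p = w \<and> successively (\<lambda>x y. y \<in> down r x) p}"
  unfolding down_paths_def successively_iff_nth by simp

lemma down_paths_unfold:
  "down_paths r w v = (if w = v then {[v]} else {}) \<union> (\<Union>c\<in>down r v. Cons v ` down_paths r w c)"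
proof (intro set_eqI iffI)
  fix p assume p: "p \<in> down_paths r w v"
  then obtain q where pq: "p = v # q"
    by (auto simp: down_paths_successively neq_Nil_conv)
  show "p \<in> (if w = v then {[v]} else {}) \<union> (\<Union>c\<in>down r v. Cons v ` down_paths r w c)"
  proof (cases q)
    case Nil
    with p pq show ?thesis by (simp add: down_paths_successively)
  next
    case (Cons c q')
    with p pq have "c \<in> down r v" "q \<in> down_paths r w c"
      by (auto simp: down_paths_successively)
    with pq show ?thesis by blast
  qed
next
  fix p assume "p \<in> (if w = v then {[v]} else {}) \<union> (\<Union>c\<in>down r v. Cons v ` down_paths r w c)"
  then show "p \<in> down_paths r w v"
    by (auto simp: down_paths_successively successively_Cons split: if_splits)
qed

lemma finite_down_paths: "finite (down_paths r w v)"
proof (induction "weight v" arbitrary: v rule: less_induct)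
  case less
  then have "\<forall>c\<in>down r v. finite (down_paths r w c)"
    using weight_down_less by blast
  then show ?case
    by (subst down_paths_unfold) simp
qed

lemma d_rec: "d r w v = (if w = v then 1 else 0) + (\<Sum>c\<in>down r v. d r w c)"
proof -
  have "card (\<Union>c\<in>down r v. Cons v ` down_paths r w c) = (\<Sum>c\<in>down r v. d r w c)"
  proof (subst card_UN_disjoint)
    show "\<forall>c\<in>down r v. \<forall>c'\<in>down r v. c \<noteq> c' \<longrightarrow>
        Cons v ` down_paths r w c \<inter> Cons v ` down_paths r w c' = {}"
      by (auto simp: down_paths_def)
  qed (simp_all add: finite_down_paths card_image d_def)
  moreover have "[v] \<notin> (\<Union>c\<in>down r v. Cons v ` down_paths r w c)"
    by (auto simp: down_paths_def)
  ultimately show ?thesis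
    unfolding d_def[of r w v] by (subst down_paths_unfold) (cases "w = v", simp_all add: finite_down_paths)
qed

lemma d_Nil: "d r w [] = (if w = [] then 1 else 0)"
  by (subst d_rec) simp

section \<open>Reduction to r = 1\<close>

definition s_letter :: "letter \<Rightarrow> letter" where
  "s_letter a = (case a of One i \<Rightarrow> One 1 | Two \<Rightarrow> Two)"

lemma s_letter_simps [simp]: "s_letter (One i) = One 1" "s_letter Two = Two"
  by (simp_all add: s_letter_def)

lemma s_eq_map [simp]: "s = map s_letter"
  by (simp add: fun_eq_iff s_def s_letter_def)

lemma set_s_subset_Two: "set (s x) \<subseteq> {Two} \<longleftrightarrow> set x \<subseteq> {Two}"
proof (induction x)
  case (Cons a x) then show ?case by (cases a) simp_all
qed simp

lemma count_list_Two_add_e: "count_list x Two + e x = length x"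
proof (induction x)
  case (Cons a x) then show ?case by (cases a) (simp_all add: e_def)
qed (simp add: e_def)

lemma valid_word_butlast: "valid_word r w \<Longrightarrow> valid_word r (butlast w)"
  unfolding valid_word_def by (meson in_set_butlastD)

definition same_last :: "'a list \<Rightarrow> 'a list \<Rightarrow> bool" where
  "same_last x y \<longleftrightarrow> x \<noteq> [] \<and> y \<noteq> [] \<and> last x = last y"

lemma same_last_map: "same_last x y \<Longrightarrow> same_last (map f x) (map f y)"
  by (simp add: same_last_def last_map)

definition d_diff :: "nat \<Rightarrow> letter list \<Rightarrow> letter list \<Rightarrow> real" where
  "d_diff r w v = real (d r w v) - (if same_last w v then real (d r (butlast w) (butlast v)) else 0)"

lemma d_diff_snoc:
  "d_diff r w (v @ [a]) =
     (\<Sum>c\<in>down r v. d_diff r w (c @ [a])) + (\<Sum>c\<in>down_last r v a. real (d r w c))"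
proof -
  have rec: "real (d r w (v @ [a])) = (if w = v @ [a] then 1 else 0)
      + (\<Sum>c\<in>down r v. real (d r w (c @ [a]))) + (\<Sum>c\<in>down_last r v a. real (d r w c))"
    using d_rec[of r w "v @ [a]"] by (simp add: sum_down_snoc)
  show ?thesis
  proof (cases "same_last w (v @ [a])")
    case True
    then obtain w' where w: "w = w' @ [a]"
      by (metis same_last_def append_butlast_last_id last_snoc)
    have "real (d r w' v) = (if w' = v then 1 else 0) + (\<Sum>c\<in>down r v. real (d r w' c))"
      using d_rec[of r w' v] by simp
    with rec show ?thesis
      using w by (simp add: d_diff_def same_last_def sum_subtractf)
  next
    case False
    then have "w \<noteq> v @ [a]" "\<And>c. \<not> same_last w (c @ [a])"
      by (auto simp: same_last_def)
    with rec False show ?thesis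
      by (simp add: d_diff_def)
  qed
qed

lemma sum_down_weighted_s:
  fixes g :: "letter list \<Rightarrow> 'a::comm_semiring_1"
  shows "(\<Sum>c\<in>down r x. of_nat r ^ count_list c Two * g (s c))
    = of_nat r ^ count_list x Two * (\<Sum>c\<in>down 1 (s x). g c)"
proof (induction x arbitrary: g)
  case (Cons a u)
  show ?case
  proof (cases a)
    case Two
    have "(\<Sum>c\<in>down r (Two # u). of_nat r ^ count_list c Two * g (s c))
        = of_nat r * of_nat r ^ count_list u Two * g (One 1 # s u)
          + of_nat r * (\<Sum>c\<in>down r u. of_nat r ^ count_list c Two * g (Two # s c))"
      by (simp add: sum_down_Two sum_distrib_left mult_ac)
    also have "\<dots> = of_nat r ^ count_list (Two # u) Two * (\<Sum>c\<in>down 1 (s (Two # u)). g c)"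
      using Cons.IH[of "\<lambda>c. g (Two # c)"] by (simp add: sum_down_Two algebra_simps)
    finally show ?thesis
      using Two by simp
  qed simp
qed simp

(* The hypothesis is d_diff_reduce for lighter words: the two are proved by a joint induction. *)
lemma d_replicate_Two:
  assumes "valid_word r x"
    and reduce: "\<And>w v. weight v \<le> 2 * k \<Longrightarrow> valid_word r w \<Longrightarrow>
      d_diff r w v = real r powi (int (count_list v Two) - int (length w)) * d_diff 1 (s w) (s v)"
  shows "real (d r x (replicate k Two))
    = real r powi (int k - int (length x)) * real (d 1 (s x) (replicate k Two))"
  using assms
proof (induction k arbitrary: x)
  case 0
  then show ?case by (simp add: d_Nil)
next
  case (Suc k)
  let ?R = "replicate k Two"
  have R: "replicate (Suc k) Two = ?R @ [Two]"
    by (simp add: replicate_append_same)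
  have "d_diff r x (?R @ [Two])
      = real r powi (int (Suc k) - int (length x)) * d_diff 1 (s x) (?R @ [Two])"
    using Suc.prems(2)[of "?R @ [Two]" x] Suc.prems(1) by simp
  show ?case
  proof (cases "same_last x (?R @ [Two])")
    case True
    then obtain x' where x: "x = x' @ [Two]"
      by (metis same_last_def append_butlast_last_id last_snoc)
    have "real (d r x' ?R) = real r powi (int (Suc k) - int (length x)) * real (d 1 (s x') ?R)"
      using Suc.IH[of x'] Suc.prems x by (simp add: valid_word_def)
    with \<open>d_diff r x _ = _\<close> show ?thesis
      unfolding R d_diff_def x by (simp add: same_last_def algebra_simps)
  next
    case False
    then have "\<not> same_last (s x) (?R @ [Two])"
      by (auto simp: same_last_def last_map s_letter_def split: letter.splits)
    with \<open>d_diff r x _ = _\<close> False show ?thesis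
      unfolding R d_diff_def by simp
  qed
qed

lemma sum_if_last_eq_One:
  fixes c :: "'a::comm_monoid_add"
  assumes "valid_word r w"
  shows "(\<Sum>j=1..r. if w \<noteq> [] \<and> last w = One j then c else 0)
    = (if w \<noteq> [] \<and> is_one (last w) then c else 0)"
proof (cases "w \<noteq> [] \<and> is_one (last w)")
  case True
  then obtain i where i: "last w = One i"
    by (cases "last w") auto
  with True assms have "1 \<le> i \<and> i \<le> r"
    unfolding valid_word_def using last_in_set by fastforce
  with True i show ?thesis by simp
next
  case False
  then have "(if w \<noteq> [] \<and> last w = One j then c else 0) = 0" for j
    by auto
  with False show ?thesis by auto
qed

lemma sum_d_snoc_One:
  assumes r: "r \<ge> 1" and w: "valid_word r w"
    and d_u: "\<And>x. valid_word r x \<Longrightarrow>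
      real (d r x u) = real r powi (int k - int (length x)) * real (d 1 (s x) u)"
    and d_diff_u: "\<And>j. d_diff r w (u @ [One j])
      = real r powi (int k - int (length w)) * d_diff 1 (s w) (u @ [One 1])"
  shows "(\<Sum>j=1..r. real (d r w (u @ [One j])))
    = real r powi (int (Suc k) - int (length w)) * real (d 1 (s w) (u @ [One 1]))"
proof -
  have r_powi: "real r powi (int (Suc k) - int (length w)) = real r * real r powi (int k - int (length w))"
    using power_int_of_nat_add[of "real r" 1 "int k - int (length w)"] r by (simp add: add_diff_eq)
  have last_One: "(if w \<noteq> [] \<and> is_one (last w) then real (d r (butlast w) u) else 0)
      = real r powi (int (Suc k) - int (length w))
        * (if w \<noteq> [] \<and> is_one (last w) then real (d 1 (s (butlast w)) u) else 0)"
    using d_u[OF valid_word_butlast[OF w]] by (cases w rule: rev_cases) (simp_all add: algebra_simps)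
  have "(\<Sum>j=1..r. real (d r w (u @ [One j]))) = (\<Sum>j=1..r. d_diff r w (u @ [One j])
      + (if w \<noteq> [] \<and> last w = One j then real (d r (butlast w) u) else 0))"
    by (intro sum.cong) (simp_all add: d_diff_def same_last_def)
  also have "\<dots> = real r * real r powi (int k - int (length w)) * d_diff 1 (s w) (u @ [One 1])
      + (if w \<noteq> [] \<and> is_one (last w) then real (d r (butlast w) u) else 0)"
    unfolding sum.distrib sum_if_last_eq_One[OF w] by (simp add: d_diff_u r)
  also have "\<dots> = real r powi (int (Suc k) - int (length w)) * real (d 1 (s w) (u @ [One 1]))"
    unfolding last_One r_powi d_diff_def
    by (auto simp: same_last_def last_map map_butlast s_letter_def algebra_simps split: letter.split)
  finally show ?thesis .
qed

lemma sum_down_last_d: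
  assumes r: "r \<ge> 1" and w: "valid_word r w"
    and reduce: "\<And>w v. weight v < weight (u @ [a]) \<Longrightarrow> valid_word r w \<Longrightarrow>
      d_diff r w v = real r powi (int (count_list v Two) - int (length w)) * d_diff 1 (s w) (s v)"
  shows "(\<Sum>c\<in>down_last r u a. real (d r w c))
    = real r powi (int (count_list (u @ [a]) Two) - int (length w))
      * (\<Sum>c\<in>down_last 1 (s u) (s_letter a). real (d 1 (s w) c))"
proof (cases "set u \<subseteq> {Two}")
  case False
  then show ?thesis
    by (simp add: down_last_def set_s_subset_Two del: s_eq_map)
next
  case True
  define k where "k = length u"
  have u: "u = replicate k Two"
    using True by (simp add: k_def replicate_length_same subset_iff)
  have val: "val a \<ge> 1"
    by (cases a) simp_all
  have d_u: "real (d r x u) = real r powi (int k - int (length x)) * real (d 1 (s x) u)"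
    if "valid_word r x" for x
    unfolding u using that
  proof (rule d_replicate_Two)
    fix w v :: "letter list"
    assume "weight v \<le> 2 * k" "valid_word r w"
    with val show "d_diff r w v = real r powi (int (count_list v Two) - int (length w)) * d_diff 1 (s w) (s v)"
      by (intro reduce) (simp_all add: u)
  qed
  show ?thesis
  proof (cases a)
    case (One i)
    then show ?thesis
      using True d_u[OF w] by (simp add: down_last_def u)
  next
    case Two
    have "d_diff r w (u @ [One j]) = real r powi (int k - int (length w)) * d_diff 1 (s w) (u @ [One 1])" for j
      using reduce[of "u @ [One j]" w] w Two by (simp add: u)
    then have "(\<Sum>j=1..r. real (d r w (u @ [One j])))
        = real r powi (int (Suc k) - int (length w)) * real (d 1 (s w) (u @ [One 1]))"
      using sum_d_snoc_One[OF r w d_u] by blast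
    with True Two show ?thesis
      by (simp add: down_last_def sum.reindex inj_on_def u)
  qed
qed

lemma sum_down_d_diff_snoc:
  assumes r: "r \<ge> 1"
    and reduce: "\<And>c. c \<in> down r u \<Longrightarrow> d_diff r w (c @ [a])
      = real r powi (int (count_list (c @ [a]) Two) - int (length w)) * d_diff 1 (s w) (s (c @ [a]))"
  shows "(\<Sum>c\<in>down r u. d_diff r w (c @ [a]))
    = real r powi (int (count_list (u @ [a]) Two) - int (length w))
      * (\<Sum>c\<in>down 1 (s u). d_diff 1 (s w) (c @ [s_letter a]))"
proof -
  let ?E = "int (count_list [a] Two) - int (length w)"
  have "(\<Sum>c\<in>down r u. d_diff r w (c @ [a]))
      = (\<Sum>c\<in>down r u. real r ^ count_list c Two * (real r powi ?E * d_diff 1 (s w) (s c @ [s_letter a])))"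
  proof (rule sum.cong)
    fix c assume "c \<in> down r u"
    then show "d_diff r w (c @ [a])
        = real r ^ count_list c Two * (real r powi ?E * d_diff 1 (s w) (s c @ [s_letter a]))"
      using reduce power_int_of_nat_add[of "real r" "count_list c Two" ?E] r by (simp add: add_diff_eq)
  qed simp
  also have "\<dots> = real r ^ count_list u Two * (\<Sum>c\<in>down 1 (s u). real r powi ?E * d_diff 1 (s w) (c @ [s_letter a]))"
    by (rule sum_down_weighted_s)
  also have "\<dots> = real r powi (int (count_list (u @ [a]) Two) - int (length w))
      * (\<Sum>c\<in>down 1 (s u). d_diff 1 (s w) (c @ [s_letter a]))"
    using power_int_of_nat_add[of "real r" "count_list u Two" ?E] r
    by (simp add: sum_distrib_left add_diff_eq mult.assoc)
  finally show ?thesis .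
qed

theorem d_diff_reduce:
  assumes r: "r \<ge> 1" and "valid_word r w"
  shows "d_diff r w v = real r powi (int (count_list v Two) - int (length w)) * d_diff 1 (s w) (s v)"
  using assms(2)
proof (induction "weight v" arbitrary: v w rule: less_induct)
  case less
  show ?case
  proof (cases v rule: rev_cases)
    case Nil
    then show ?thesis by (simp add: d_diff_def same_last_def d_Nil)
  next
    case (snoc u a)
    let ?P = "real r powi (int (count_list v Two) - int (length w))"
    have below: "(\<Sum>c\<in>down r u. d_diff r w (c @ [a]))
        = ?P * (\<Sum>c\<in>down 1 (s u). d_diff 1 (s w) (c @ [s_letter a]))"
      unfolding snoc using r
    proof (rule sum_down_d_diff_snoc)
      fix c assume "c \<in> down r u"
      then have "weight (c @ [a]) < weight v"
        using snoc weight_down_less by fastforce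
      with less show "d_diff r w (c @ [a])
          = real r powi (int (count_list (c @ [a]) Two) - int (length w)) * d_diff 1 (s w) (s (c @ [a]))"
        by blast
    qed
    have last: "(\<Sum>c\<in>down_last r u a. real (d r w c))
        = ?P * (\<Sum>c\<in>down_last 1 (s u) (s_letter a). real (d 1 (s w) c))"
      unfolding snoc by (rule sum_down_last_d[OF r less.prems]) (use less.hyps snoc in blast)
    have "d_diff r w v = (\<Sum>c\<in>down r u. d_diff r w (c @ [a])) + (\<Sum>c\<in>down_last r u a. real (d r w c))"
      unfolding snoc by (rule d_diff_snoc)
    also have "\<dots> = ?P * ((\<Sum>c\<in>down 1 (s u). d_diff 1 (s w) (c @ [s_letter a]))
        + (\<Sum>c\<in>down_last 1 (s u) (s_letter a). real (d 1 (s w) c)))"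
      unfolding below last by (rule distrib_left[symmetric])
    also have "\<dots> = ?P * d_diff 1 (s w) (s v)"
      unfolding snoc d_diff_snoc[of 1 "s w" "s u" "s_letter a", symmetric] by simp
    finally show ?thesis .
  qed
qed

section \<open>Cutting the common suffix\<close>

lemma lcp_le_length: "lcp xs ys \<le> length xs" "lcp xs ys \<le> length ys"
  by (induction xs ys rule: lcp.induct) auto

lemma nth_less_lcp: "i < lcp xs ys \<Longrightarrow> xs ! i = ys ! i"
proof (induction xs ys arbitrary: i rule: lcp.induct)
  case (1 a as b bs) then show ?case by (cases i) (auto split: if_splits)
qed auto

lemma nth_lcp_neq: "lcp xs ys < length xs \<Longrightarrow> lcp xs ys < length ys \<Longrightarrow> xs ! lcp xs ys \<noteq> ys ! lcp xs ys"
  by (induction xs ys rule: lcp.induct) auto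

lemma lcp_commute: "lcp xs ys = lcp ys xs"
  by (induction xs ys rule: lcp.induct) (auto elim: lcp.elims)

lemma cut_0 [simp]: "cut x 0 = x"
  by (simp add: cut_def)

lemma length_cut [simp]: "length (cut x l) = length x - l"
  by (simp add: cut_def)

lemma cut_eq_Nil_iff [simp]: "cut x l = [] \<longleftrightarrow> length x \<le> l"
  by (auto simp: cut_def)

lemma butlast_cut: "butlast (cut x l) = cut x (Suc l)"
  by (simp add: cut_def butlast_take)

lemma last_cut:
  assumes "l < length x"
  shows "last (cut x l) = rev x ! l"
proof -
  from assms have "length x - l = Suc (length x - Suc l)"
    by simp
  with assms show ?thesis
    by (simp add: cut_def rev_nth take_Suc_conv_app_nth)
qed

lemma valid_word_cut: "valid_word r x \<Longrightarrow> valid_word r (cut x l)"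
  unfolding valid_word_def cut_def by (meson in_set_takeD)

lemma h_le_length: "h w v \<le> length w" "h w v \<le> length v"
  using lcp_le_length[of "rev w" "rev v"] by (simp_all add: h_def)

lemma strip_eq_cut: "strip w v = cut w (h w v)" "strip v w = cut v (h w v)"
  by (simp_all add: strip_def cut_def h_def lcp_commute)

lemma same_last_cut_less_h: "l < h w v \<Longrightarrow> same_last (cut w l) (cut v l)"
  using h_le_length[of w v] nth_less_lcp[of l "rev w" "rev v"]
  by (auto simp: same_last_def last_cut h_def)

lemma not_same_last_cut_h: "\<not> same_last (cut w (h w v)) (cut v (h w v))"
  using h_le_length[of w v] nth_lcp_neq[of "rev w" "rev v"]
  by (auto simp: same_last_def last_cut h_def)

lemma d_telescope_cut:
  assumes "\<And>l. l < n \<Longrightarrow> same_last (cut w l) (cut v l)"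
  shows "real (d r w v) = (\<Sum>l<n. d_diff r (cut w l) (cut v l)) + real (d r (cut w n) (cut v n))"
  using assms by (induction n) (simp_all add: d_diff_def butlast_cut)

lemma d_eq_sum_d_diff_cut: "real (d r w v) = (\<Sum>l\<le>h w v. d_diff r (cut w l) (cut v l))"
  using d_telescope_cut[of "h w v" w v r] same_last_cut_less_h not_same_last_cut_h[of w v]
  by (simp add: d_diff_def lessThan_Suc_atMost[symmetric])

lemma same_last_s_cut_iff:
  assumes "l \<le> h w v"
  shows "same_last (s (cut w l)) (s (cut v l)) \<longleftrightarrow> l < h w v \<or> ind w v"
proof (cases "l < h w v")
  case True
  then show ?thesis
    using same_last_map[OF same_last_cut_less_h] by simp
next
  case False
  with assms have "l = h w v" by simp
  then show ?thesis
    using not_same_last_cut_h[of w v]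
    by (cases "last (cut w l)"; cases "last (cut v l)")
      (auto simp: ind_def strip_eq_cut[where w=w and v=v] same_last_def last_map)
qed

lemma d_eq_sum_d_YF:
  assumes "r \<ge> 1" and "valid_word r w"
  shows "real (d r w v) =
    (\<Sum>l\<le>h w v. (real (d 1 (s (cut w l)) (s (cut v l)))
        - (if l < h w v \<or> ind w v then real (d 1 (s (cut w (l+1))) (s (cut v (l+1)))) else 0))
      * real r powi (int (nletters v) - int (nletters w) - int (e (cut v l))))"
    (is "_ = (\<Sum>l\<le>_. ?term l)")
proof -
  have "real (d r w v) = (\<Sum>l\<le>h w v. d_diff r (cut w l) (cut v l))"
    by (rule d_eq_sum_d_diff_cut)
  also have "\<dots> = (\<Sum>l\<le>h w v. ?term l)"
  proof (rule sum.cong)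
    fix l assume "l \<in> {..h w v}"
    then have l: "l \<le> h w v" by simp
    have "int (count_list (cut v l) Two) - int (length (cut w l))
        = int (nletters v) - int (nletters w) - int (e (cut v l))"
      using count_list_Two_add_e[of "cut v l"] l h_le_length[of w v] by (simp add: nletters_def)
    then show "d_diff r (cut w l) (cut v l) = ?term l"
      using d_diff_reduce[OF assms(1) valid_word_cut[OF assms(2)], of l "cut v l"]
        same_last_s_cut_iff[OF l]
      by (simp add: d_diff_def map_butlast[symmetric] butlast_cut)
  qed simp
  finally show ?thesis .
qed

theorem mainTheorem7:
  fixes r :: nat and w v :: "letter list"
  assumes "r \<ge> 1" and "valid_word r w" and "valid_word r v"
  shows "(ind w v \<longrightarrow>
           real (d r w v) =
             (\<Sum>l\<in>{0..h w v}.
                (real (d 1 (s (cut w l)) (s (cut v l))) - real (d 1 (s (cut w (l+1))) (s (cut v (l+1)))))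
                * real r powi (int (nletters v) - int (nletters w) - int (e (cut v l)))))
       \<and> (\<not> ind w v \<longrightarrow>
           real (d r w v) =
             (\<Sum>l\<in>{..<h w v}.
                (real (d 1 (s (cut w l)) (s (cut v l))) - real (d 1 (s (cut w (l+1))) (s (cut v (l+1)))))
                * real r powi (int (nletters v) - int (nletters w) - int (e (cut v l))))
             + real (d 1 (s (strip w v)) (s (strip v w)))
                * real r powi (int (nletters v) - int (nletters w) - int (e (strip v w))))"
proof -
  define D where "D l = real (d 1 (s (cut w l)) (s (cut v l)))" for l
  define P where "P l = real r powi (int (nletters v) - int (nletters w) - int (e (cut v l)))" for l
  have formula: "real (d r w v) = (\<Sum>l\<le>h w v. (D l - (if l < h w v \<or> ind w v then D (l+1) else 0)) * P l)"
    unfolding D_def P_def by (rule d_eq_sum_d_YF[OF assms(1,2)])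
  have "(\<Sum>l<h w v. (D l - (if l < h w v \<or> ind w v then D (l+1) else 0)) * P l)
      = (\<Sum>l<h w v. (D l - D (l+1)) * P l)"
    by (rule sum.cong) simp_all
  with formula show ?thesis
    unfolding D_def[symmetric] P_def[symmetric] strip_eq_cut[where w=w and v=v]
    by (simp add: atLeast0AtMost lessThan_Suc_atMost[symmetric])
qed

end
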